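(* Let $k\in\mathbb N$ and $f\in\mathcal R^k(\mathbb R^n)$. Let $p,q\in\mathbb R[x_1,\dots,x_n]$ with $q$ nonvanishing on $\mathrm{dom}(f)$ and $f=\frac{p}{q}$ on $\mathrm{dom}(f)$. Then for all $l\in\mathbb N$ and all integers $t\ge1$, the function $p^lf^t$ belongs to $\mathcal R^{k+l}(\mathbb R^n)$.
   Context: For $k\in\mathbb N\cup\{\infty\}$ and $n\ge 1$, $\mathcal R^k(\mathbb R^n)$ denotes the ring of $k$-regulous functions: functions $f:\mathbb R^n\to\mathbb R$ of class $C^k$ for which there exist a nonempty Zariski open set $U\subseteq\mathbb R^n$ and polynomials $p,q$ with $q$ nonvanishing on $U$ and $f=p/q$ on $U$. Such an $f$ determines a rational function; $\mathrm{dom}(f)$ is the largest Zariski open set on which this rational function is regular, and $\mathrm{pol}(f)=\mathbb R^n\setminus\mathrm{dom}(f)$. *)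

theory Defs
  imports "HOL-Analysis.Analysis"
begin

inductive_set poly_fun :: "(real^'n \<Rightarrow> real) set" where
  pf_const: "(\<lambda>x. c) \<in> poly_fun"
| pf_coord: "(\<lambda>x. x $ i) \<in> poly_fun"
| pf_add: "p \<in> poly_fun \<Longrightarrow> q \<in> poly_fun \<Longrightarrow> (\<lambda>x. p x + q x) \<in> poly_fun"
| pf_mult: "p \<in> poly_fun \<Longrightarrow> q \<in> poly_fun \<Longrightarrow> (\<lambda>x. p x * q x) \<in> poly_fun"

definition zariski_closed :: "(real^'n) set \<Rightarrow> bool" where
  "zariski_closed S \<longleftrightarrow> (\<exists>P \<subseteq> poly_fun. S = {x. \<forall>p\<in>P. p x = 0})"

definition zariski_open :: "(real^'n) set \<Rightarrow> bool" where
  "zariski_open U \<longleftrightarrow> zariski_closed (- U)"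

fun Ck :: "nat \<Rightarrow> (real^'n \<Rightarrow> real) \<Rightarrow> bool" where
  "Ck 0 f \<longleftrightarrow> continuous_on UNIV f"
| "Ck (Suc k) f \<longleftrightarrow> (\<exists>f'. (\<forall>x. (f has_derivative f' x) (at x)) \<and>
                          (\<forall>i. Ck k (\<lambda>x. f' x (axis i 1))))"

definition rational_rep :: "(real^'n \<Rightarrow> real) \<Rightarrow> (real^'n \<Rightarrow> real) \<Rightarrow> (real^'n \<Rightarrow> real) \<Rightarrow> bool" where
  "rational_rep f a b \<longleftrightarrow> a \<in> poly_fun \<and> b \<in> poly_fun \<and>
     (\<exists>U. zariski_open U \<and> U \<noteq> {} \<and> (\<forall>y\<in>U. b y \<noteq> 0 \<and> f y = a y / b y))"

definition regulous :: "nat \<Rightarrow> (real^'n \<Rightarrow> real) \<Rightarrow> bool" where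
  "regulous k f \<longleftrightarrow> Ck k f \<and> (\<exists>p q. rational_rep f p q)"

definition rdom :: "(real^'n \<Rightarrow> real) \<Rightarrow> (real^'n) set" where
  "rdom f = {x. \<exists>a b. rational_rep f a b \<and> b x \<noteq> 0}"

definition pol :: "(real^'n \<Rightarrow> real) \<Rightarrow> (real^'n) set" where
  "pol f = UNIV - rdom f"

end

theory Submission
  imports Defs "HOL-Computational_Algebra.Polynomial"
begin

text \<open>Put g = p^(l+1) f^t and let b be the denominator of a rational representation of f.
  Where b does not vanish, f = p/q, so g = p^(l+1+t)/q^t there and its partial derivatives are
  (l+1+t) (D_i p) p^l f^t - t (D_i q) p^l f^(t+1), which by induction on l are globally C^(k+l).
  These formulas are the derivative of g everywhere: every line through a point with b \<noteq> 0
  meets the zero set of b in finitely many points, so the mean value estimate for g holds along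
  it, and the density of {b \<noteq> 0} carries the estimate to the zero set itself.\<close>

lemma Ck_SucD: "Ck (Suc k) f \<Longrightarrow> Ck k f"
proof (induction k arbitrary: f)
  case 0
  then obtain f' where "\<forall>x. (f has_derivative f' x) (at x)" by auto
  then show ?case
    by (auto intro!: continuous_at_imp_continuous_on has_derivative_continuous)
next
  case (Suc k)
  then show ?case by auto
qed

lemma Ck_mono: "m \<le> k \<Longrightarrow> Ck k f \<Longrightarrow> Ck m f"
  by (induction k) (simp, metis Ck_SucD le_Suc_eq)

lemma Ck_imp_continuous_on: "Ck k f \<Longrightarrow> continuous_on UNIV f"
  using Ck_mono[of 0 k f] by simp

lemma Ck_SucI:
  assumes "\<And>x. (f has_derivative (\<lambda>h. \<Sum>i\<in>UNIV. h $ i * G i x)) (at x)"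
    and "\<And>i. Ck k (G i)"
  shows "Ck (Suc k) f"
proof -
  have "(\<Sum>j\<in>UNIV. axis i 1 $ j * G j x) = (\<Sum>j\<in>UNIV. if j = i then G j x else 0)" for i x
    by (rule sum.cong) (auto simp: axis_def)
  then have "(\<Sum>j\<in>UNIV. axis i 1 $ j * G j x) = G i x" for i x
    by simp
  then show ?thesis
    using assms by (auto intro!: exI[of _ "\<lambda>x h. \<Sum>i\<in>UNIV. h $ i * G i x"])
qed

lemma Ck_const: "Ck k (\<lambda>x. c)"
  by (induction k arbitrary: c) (auto intro!: exI[of _ "\<lambda>x h. 0"])

lemma Ck_add: "Ck k f \<Longrightarrow> Ck k g \<Longrightarrow> Ck k (\<lambda>x. f x + g x)"
proof (induction k arbitrary: f g)
  case 0
  then show ?case by (auto intro: continuous_intros)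
next
  case (Suc k)
  then obtain f' g' where
    "\<forall>x. (f has_derivative f' x) (at x)" "\<forall>i. Ck k (\<lambda>x. f' x (axis i 1))" and
    "\<forall>x. (g has_derivative g' x) (at x)" "\<forall>i. Ck k (\<lambda>x. g' x (axis i 1))"
    by auto
  with Suc.IH show ?case
    by (auto intro!: exI[of _ "\<lambda>x h. f' x h + g' x h"] has_derivative_add)
qed

lemma Ck_mult: "Ck k f \<Longrightarrow> Ck k g \<Longrightarrow> Ck k (\<lambda>x. f x * g x)"
proof (induction k arbitrary: f g)
  case 0
  then show ?case by (auto intro: continuous_intros)
next
  case (Suc k)
  then obtain f' g' where
    "\<forall>x. (f has_derivative f' x) (at x)" "\<forall>i. Ck k (\<lambda>x. f' x (axis i 1))" and
    "\<forall>x. (g has_derivative g' x) (at x)" "\<forall>i. Ck k (\<lambda>x. g' x (axis i 1))"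
    by auto
  moreover have "Ck k f" "Ck k g"
    using Suc.prems Ck_SucD by blast+
  ultimately show ?case
    by (auto intro!: exI[of _ "\<lambda>x h. f x * g' x h + f' x h * g x"]
        has_derivative_mult Ck_add Suc.IH)
qed

lemma Ck_diff: "Ck k f \<Longrightarrow> Ck k g \<Longrightarrow> Ck k (\<lambda>x. f x - g x)"
  using Ck_add[of k f "\<lambda>x. (- 1) * g x"] Ck_mult[OF Ck_const, of k g "- 1"] by simp

lemma Ck_power: "Ck k f \<Longrightarrow> Ck k (\<lambda>x. f x ^ n)"
  by (induction n) (auto intro: Ck_const Ck_mult)

lemma poly_fun_power: "p \<in> poly_fun \<Longrightarrow> (\<lambda>x. p x ^ n) \<in> poly_fun"
  by (induction n) (auto intro: poly_fun.intros)

lemma poly_fun_has_derivative: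
  "p \<in> poly_fun \<Longrightarrow> \<exists>P'. (\<forall>i. P' i \<in> poly_fun) \<and>
     (\<forall>x. (p has_derivative (\<lambda>h. \<Sum>i\<in>UNIV. h $ i * P' i x)) (at x))"
proof (induction rule: poly_fun.induct)
  case (pf_const c)
  show ?case
    by (intro exI[of _ "\<lambda>i x. 0"]) (auto intro: poly_fun.intros)
next
  case (pf_coord j)
  have "(\<lambda>h::real^'a. \<Sum>i\<in>UNIV. h $ i * (if i = j then 1 else 0)) = (\<lambda>h. h $ j)"
    by (auto simp: if_distrib cong: if_cong)
  then show ?case
    by (intro exI[of _ "\<lambda>i x. if i = j then 1 else 0"])
      (auto intro: poly_fun.intros bounded_linear.has_derivative[OF bounded_linear_vec_nth]
        has_derivative_ident)
next
  case (pf_add p q)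
  then obtain P Q where P: "\<forall>i. P i \<in> poly_fun" "\<forall>x. (p has_derivative (\<lambda>h. \<Sum>i\<in>UNIV. h $ i * P i x)) (at x)"
    and Q: "\<forall>i. Q i \<in> poly_fun" "\<forall>x. (q has_derivative (\<lambda>h. \<Sum>i\<in>UNIV. h $ i * Q i x)) (at x)"
    by blast
  have "((\<lambda>x. p x + q x) has_derivative (\<lambda>h. \<Sum>i\<in>UNIV. h $ i * (P i x + Q i x))) (at x)" for x
    using has_derivative_add[OF P(2)[rule_format, of x] Q(2)[rule_format, of x]]
    by (simp add: distrib_left sum.distrib)
  with P(1) Q(1) show ?case
    by (intro exI[of _ "\<lambda>i x. P i x + Q i x"]) (auto intro: poly_fun.intros)
next
  case (pf_mult p q)
  then obtain P Q where P: "\<forall>i. P i \<in> poly_fun" "\<forall>x. (p has_derivative (\<lambda>h. \<Sum>i\<in>UNIV. h $ i * P i x)) (at x)"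
    and Q: "\<forall>i. Q i \<in> poly_fun" "\<forall>x. (q has_derivative (\<lambda>h. \<Sum>i\<in>UNIV. h $ i * Q i x)) (at x)"
    by blast
  have "((\<lambda>x. p x * q x) has_derivative
      (\<lambda>h. \<Sum>i\<in>UNIV. h $ i * (p x * Q i x + P i x * q x))) (at x)" for x
    using has_derivative_mult[OF P(2)[rule_format, of x] Q(2)[rule_format, of x]]
    by (simp add: distrib_left sum.distrib sum_distrib_left sum_distrib_right algebra_simps)
  moreover have "(\<lambda>x. p x * Q i x + P i x * q x) \<in> poly_fun" for i
    using P(1) Q(1) pf_mult.hyps by (auto intro!: poly_fun.intros)
  ultimately show ?case
    by (intro exI[of _ "\<lambda>i x. p x * Q i x + P i x * q x"]) auto
qed

lemma poly_fun_Ck: "p \<in> poly_fun \<Longrightarrow> Ck k p"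
proof (induction k arbitrary: p)
  case 0
  then obtain P' where "\<forall>x. (p has_derivative (\<lambda>h. \<Sum>i\<in>UNIV. h $ i * P' i x)) (at x)"
    using poly_fun_has_derivative by blast
  then show ?case
    by (auto intro!: continuous_at_imp_continuous_on has_derivative_continuous)
next
  case (Suc k)
  then obtain P' where "\<forall>i. P' i \<in> poly_fun"
    "\<forall>x. (p has_derivative (\<lambda>h. \<Sum>i\<in>UNIV. h $ i * P' i x)) (at x)"
    using poly_fun_has_derivative by blast
  with Suc.IH show ?case
    by (intro Ck_SucI[of p P']) auto
qed

lemma poly_fun_along_line: "b \<in> poly_fun \<Longrightarrow> \<exists>P. \<forall>t. b (u + t *\<^sub>R v) = poly P t"
proof (induction rule: poly_fun.induct)
  case (pf_const c)
  show ?case by (rule exI[of _ "[:c:]"]) simp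
next
  case (pf_coord i)
  show ?case by (rule exI[of _ "[:u $ i, v $ i:]"]) (simp add: algebra_simps)
next
  case (pf_add p q)
  then obtain P Q where "\<forall>t. p (u + t *\<^sub>R v) = poly P t" "\<forall>t. q (u + t *\<^sub>R v) = poly Q t"
    by blast
  then show ?case by (intro exI[of _ "P + Q"]) simp
next
  case (pf_mult p q)
  then obtain P Q where "\<forall>t. p (u + t *\<^sub>R v) = poly P t" "\<forall>t. q (u + t *\<^sub>R v) = poly Q t"
    by blast
  then show ?case by (intro exI[of _ "P * Q"]) simp
qed

lemma finite_poly_fun_zeros_on_line:
  assumes "b \<in> poly_fun" "b u \<noteq> 0"
  shows "finite {t. b (u + t *\<^sub>R v) = 0}"
proof -
  obtain P where P: "\<And>t. b (u + t *\<^sub>R v) = poly P t"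
    using poly_fun_along_line[OF assms(1)] by blast
  have "poly P 0 \<noteq> 0"
    using P[of 0] assms(2) by simp
  then have "P \<noteq> 0" by auto
  then show ?thesis
    unfolding P by (rule poly_roots_finite)
qed

lemma closure_poly_fun_nonzero:
  assumes "b \<in> poly_fun" "b c \<noteq> 0"
  shows "closure {x. b x \<noteq> 0} = UNIV"
proof (intro set_eqI iffI UNIV_I)
  fix x0
  let ?line = "\<lambda>t. c + t *\<^sub>R (x0 - c)"
  have "\<not> 1 islimpt {t. b (?line t) = 0}"
    using islimpt_finite finite_poly_fun_zeros_on_line[OF assms] by blast
  then have "eventually (\<lambda>t. ?line t \<in> closure {x. b x \<noteq> 0}) (at 1)"
    unfolding islimpt_iff_eventually by (auto elim: eventually_mono intro: closure_subset[THEN subsetD])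
  moreover have "(?line \<longlongrightarrow> ?line 1) (at 1)"
    by (intro tendsto_intros)
  ultimately show "x0 \<in> closure {x. b x \<noteq> 0}"
    by (intro Lim_in_closed_set[of _ ?line "at 1"]) auto
qed

lemma gradient_increment_bound:
  fixes g :: "real^'n \<Rightarrow> real" and G :: "'n \<Rightarrow> real^'n \<Rightarrow> real"
  assumes g: "continuous_on UNIV g"
    and b: "b \<in> poly_fun" "b x \<noteq> 0"
    and der: "\<And>z. b z \<noteq> 0 \<Longrightarrow> (g has_derivative (\<lambda>h. \<Sum>i\<in>UNIV. h $ i * G i z)) (at z)"
    and near: "\<And>z. z \<in> closed_segment x y \<Longrightarrow> (\<Sum>i\<in>UNIV. \<bar>G i z - G i x0\<bar>) \<le> \<epsilon>"
  shows "\<bar>g y - g x - (\<Sum>i\<in>UNIV. (y - x) $ i * G i x0)\<bar> \<le> \<epsilon> * norm (y - x)"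
proof -
  define v where "v = y - x"
  define \<phi> where "\<phi> t = g (x + t *\<^sub>R v) - t * (\<Sum>i\<in>UNIV. v $ i * G i x0)" for t
  define \<phi>' where "\<phi>' t = (\<Sum>i\<in>UNIV. v $ i * (G i (x + t *\<^sub>R v) - G i x0))" for t
  have "(\<phi>' has_integral \<phi> 1 - \<phi> 0) {0..1}"
  proof (rule fundamental_theorem_of_calculus_interior_strong)
    show "finite {t. b (x + t *\<^sub>R v) = 0}"
      using finite_poly_fun_zeros_on_line[OF b] .
    show "continuous_on {0..1} \<phi>"
      unfolding \<phi>_def by (intro continuous_intros continuous_on_compose2[OF g]) auto
    fix t assume "t \<in> {0<..<1} - {t. b (x + t *\<^sub>R v) = 0}"
    then have "b (x + t *\<^sub>R v) \<noteq> 0" by simp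
    moreover have "((\<lambda>t. x + t *\<^sub>R v) has_derivative (\<lambda>s. s *\<^sub>R v)) (at t)"
      by (auto intro!: derivative_eq_intros)
    ultimately have "((\<lambda>t. g (x + t *\<^sub>R v)) has_derivative
        (\<lambda>s. \<Sum>i\<in>UNIV. (s *\<^sub>R v) $ i * G i (x + t *\<^sub>R v))) (at t)"
      using has_derivative_compose[of "\<lambda>t. x + t *\<^sub>R v" _ t UNIV g] der by blast
    then show "(\<phi> has_vector_derivative \<phi>' t) (at t)"
      unfolding \<phi>_def \<phi>'_def has_vector_derivative_def
      by (auto intro!: derivative_eq_intros
          simp: sum_distrib_left sum_subtractf algebra_simps)
  qed simp
  moreover have "norm (\<phi>' t) \<le> \<epsilon> * norm v" if "t \<in> {0..1}" for t
  proof -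
    have "x + t *\<^sub>R v \<in> closed_segment x y"
      using that unfolding in_segment v_def by (auto intro!: exI[of _ t] simp: algebra_simps)
    have "\<bar>\<phi>' t\<bar> \<le> (\<Sum>i\<in>UNIV. \<bar>v $ i\<bar> * \<bar>G i (x + t *\<^sub>R v) - G i x0\<bar>)"
      unfolding \<phi>'_def by (rule order_trans[OF sum_abs]) (simp add: abs_mult)
    also have "\<dots> \<le> (\<Sum>i\<in>UNIV. norm v * \<bar>G i (x + t *\<^sub>R v) - G i x0\<bar>)"
      by (intro sum_mono mult_right_mono) (simp_all add: component_le_norm_cart)
    also have "\<dots> \<le> norm v * \<epsilon>"
      using near[OF \<open>x + t *\<^sub>R v \<in> closed_segment x y\<close>]
      by (simp add: sum_distrib_left[symmetric] mult_left_mono)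
    finally show ?thesis by (simp add: mult.commute)
  qed
  moreover have "0 \<le> \<epsilon>"
    using near[of x] by (meson ends_in_segment(1) order_trans sum_nonneg abs_ge_zero)
  ultimately have "norm (\<phi> 1 - \<phi> 0) \<le> \<epsilon> * norm v"
    using has_integral_bound_real[of "\<epsilon> * norm v" "{}" \<phi>' "\<phi> 1 - \<phi> 0" 0 1] by simp
  then show ?thesis
    by (simp add: \<phi>_def v_def algebra_simps)
qed

lemma has_derivative_across_poly_fun_zeros:
  fixes g :: "real^'n \<Rightarrow> real" and G :: "'n \<Rightarrow> real^'n \<Rightarrow> real"
  assumes g: "continuous_on UNIV g" and G: "\<And>i. continuous_on UNIV (G i)"
    and b: "b \<in> poly_fun" "b c \<noteq> 0"
    and der: "\<And>z. b z \<noteq> 0 \<Longrightarrow> (g has_derivative (\<lambda>h. \<Sum>i\<in>UNIV. h $ i * G i z)) (at z)"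
  shows "(g has_derivative (\<lambda>h. \<Sum>i\<in>UNIV. h $ i * G i x0)) (at x0)"
  unfolding has_derivative_at_alt
proof (intro conjI allI impI)
  show "bounded_linear (\<lambda>h. \<Sum>i\<in>UNIV. h $ i * G i x0)"
    by (intro bounded_linear_intros bounded_linear_vec_nth)
  fix \<epsilon> :: real assume "\<epsilon> > 0"
  have "isCont (\<lambda>z. \<Sum>i\<in>UNIV. \<bar>G i z - G i x0\<bar>) x0"
    using G by (intro continuous_intros) (auto simp: continuous_on_eq_continuous_at)
  then obtain \<delta> where "\<delta> > 0" and \<delta>:
      "\<And>z. dist z x0 < \<delta> \<Longrightarrow> (\<Sum>i\<in>UNIV. \<bar>G i z - G i x0\<bar>) \<le> \<epsilon>"
    unfolding continuous_at_eps_delta using \<open>\<epsilon> > 0\<close>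
    by (fastforce simp: dist_real_def)
  show "\<exists>d>0. \<forall>y. norm (y - x0) < d \<longrightarrow>
      norm (g y - g x0 - (\<Sum>i\<in>UNIV. (y - x0) $ i * G i x0)) \<le> \<epsilon> * norm (y - x0)"
  proof (intro exI conjI allI impI)
    fix y assume "norm (y - x0) < \<delta>"
    then have y: "y \<in> ball x0 \<delta>" by (simp add: dist_norm norm_minus_commute)
    define S where "S = ball x0 \<delta> \<inter> {x. b x \<noteq> 0}"
    \<comment> \<open>The estimate holds off the zero set of b and passes to x0 by density and continuity.\<close>
    have "x0 \<in> closure S"
      using open_Int_closure_subset[of "ball x0 \<delta>" "{x. b x \<noteq> 0}"]
        closure_poly_fun_nonzero[OF b] \<open>\<delta> > 0\<close>
      unfolding S_def by auto
    moreover have "continuous_on (closure S)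
        (\<lambda>x. \<bar>g y - g x - (\<Sum>i\<in>UNIV. (y - x) $ i * G i x0)\<bar> - \<epsilon> * norm (y - x))"
      by (intro continuous_intros continuous_on_subset[OF g]) auto
    moreover have "\<bar>g y - g x - (\<Sum>i\<in>UNIV. (y - x) $ i * G i x0)\<bar> - \<epsilon> * norm (y - x) \<le> 0"
      if "x \<in> S" for x
    proof -
      have "closed_segment x y \<subseteq> ball x0 \<delta>"
        using that y by (intro closed_segment_subset) (auto simp: S_def)
      then have "(\<Sum>i\<in>UNIV. \<bar>G i z - G i x0\<bar>) \<le> \<epsilon>" if "z \<in> closed_segment x y" for z
        using that \<delta> by (auto simp: dist_commute)
      with gradient_increment_bound[OF g b(1) _ der] \<open>x \<in> S\<close> show ?thesis
        by (simp add: S_def)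
    qed
    ultimately show "norm (g y - g x0 - (\<Sum>i\<in>UNIV. (y - x0) $ i * G i x0)) \<le> \<epsilon> * norm (y - x0)"
      using continuous_le_on_closure[where a=0] by fastforce
  qed (rule \<open>\<delta> > 0\<close>)
qed

lemma has_derivative_power_mult_quotient_power:
  fixes p q :: "'a::real_normed_vector \<Rightarrow> real"
  assumes dp: "(p has_derivative dp) (at z)" and dq: "(q has_derivative dq) (at z)" and "q z \<noteq> 0"
  shows "((\<lambda>x. p x ^ Suc l * (p x / q x) ^ Suc s) has_derivative
     (\<lambda>h. real (Suc l + Suc s) * dp h * (p z ^ l * (p z / q z) ^ Suc s)
        - real (Suc s) * dq h * (p z ^ l * (p z / q z) ^ Suc (Suc s)))) (at z)"
  using has_derivative_mult[OF has_derivative_power[OF dp, of "Suc l"]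
      has_derivative_power[OF has_derivative_divide[OF dp dq \<open>q z \<noteq> 0\<close>], of "Suc s"]]
  by (rule has_derivative_eq_rhs)
    (use \<open>q z \<noteq> 0\<close> in \<open>auto simp: field_simps power_Suc power_divide\<close>)

lemma Ck_poly_power_mult_power:
  fixes f p q b :: "real^'n \<Rightarrow> real"
  assumes f: "Ck k f"
    and p: "p \<in> poly_fun" and q: "q \<in> poly_fun" and b: "b \<in> poly_fun" "b c \<noteq> 0"
    and f_eq: "\<And>z. b z \<noteq> 0 \<Longrightarrow> q z \<noteq> 0 \<and> f z = p z / q z"
    and "t \<ge> 1"
  shows "Ck (k + l) (\<lambda>x. p x ^ l * f x ^ t)"
  using \<open>t \<ge> 1\<close>
proof (induction l arbitrary: t)
  case 0
  show ?case
    using Ck_power[OF f] by simp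
next
  case (Suc l)
  then obtain s where t: "t = Suc s"
    using not0_implies_Suc by fastforce
  obtain P' where P': "\<forall>i. P' i \<in> poly_fun"
    "\<forall>x. (p has_derivative (\<lambda>h. \<Sum>i\<in>UNIV. h $ i * P' i x)) (at x)"
    using poly_fun_has_derivative[OF p] by blast
  obtain Q' where Q': "\<forall>i. Q' i \<in> poly_fun"
    "\<forall>x. (q has_derivative (\<lambda>h. \<Sum>i\<in>UNIV. h $ i * Q' i x)) (at x)"
    using poly_fun_has_derivative[OF q] by blast
  define g where "g x = p x ^ Suc l * f x ^ t" for x
  define G where "G i x = real (Suc l + t) * P' i x * (p x ^ l * f x ^ t)
    - real t * Q' i x * (p x ^ l * f x ^ Suc t)" for i x
  have G_Ck: "Ck (k + l) (G i)" for i
    unfolding G_def using P'(1) Q'(1) Suc.IH[of t] Suc.IH[of "Suc t"] Suc.prems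
    by (intro Ck_diff Ck_mult[OF Ck_mult[OF Ck_const poly_fun_Ck]]) auto
  have "(g has_derivative (\<lambda>h. \<Sum>i\<in>UNIV. h $ i * G i z)) (at z)" if "b z \<noteq> 0" for z
  proof -
    have "q z \<noteq> 0" and fz: "f z = p z / q z"
      using f_eq[OF that] by auto
    have "open {x. b x \<noteq> 0}"
      using poly_fun_Ck[OF b(1), of 0] by (simp add: open_Collect_neq)
    moreover have "p x ^ Suc l * (p x / q x) ^ Suc s = g x" if "x \<in> {x. b x \<noteq> 0}" for x
      using f_eq that by (simp add: g_def t)
    ultimately have D: "(g has_derivative
        (\<lambda>h. real (Suc l + Suc s) * (\<Sum>i\<in>UNIV. h $ i * P' i z) * (p z ^ l * (p z / q z) ^ Suc s)
          - real (Suc s) * (\<Sum>i\<in>UNIV. h $ i * Q' i z) * (p z ^ l * (p z / q z) ^ Suc (Suc s)))) (at z)"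
      using has_derivative_transform_within_open[OF has_derivative_power_mult_quotient_power[OF
          P'(2)[rule_format, of z] Q'(2)[rule_format, of z] \<open>q z \<noteq> 0\<close>]] that
      by blast
    have gradient_form: "(\<lambda>h. c * (\<Sum>i\<in>UNIV. h $ i * P' i z) * A - d * (\<Sum>i\<in>UNIV. h $ i * Q' i z) * B)
        = (\<lambda>h. \<Sum>i\<in>UNIV. h $ i * (c * P' i z * A - d * Q' i z * B))" for c d A B
      by (simp add: fun_eq_iff sum_subtractf sum_distrib_left sum_distrib_right mult_ac right_diff_distrib)
    show ?thesis
      using D unfolding G_def fz t gradient_form .
  qed
  moreover have "continuous_on UNIV g"
    unfolding g_def
    using Ck_imp_continuous_on[OF Ck_mult[OF Ck_power[OF poly_fun_Ck[OF p]] Ck_power[OF f]]] .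
  moreover have "continuous_on UNIV (G i)" for i
    using Ck_imp_continuous_on[OF G_Ck] .
  ultimately have "(g has_derivative (\<lambda>h. \<Sum>i\<in>UNIV. h $ i * G i x)) (at x)" for x
    using has_derivative_across_poly_fun_zeros[OF _ _ b] by blast
  then have "Ck (Suc (k + l)) g"
    using Ck_SucI[of g G "k + l"] G_Ck by blast
  then show ?case
    unfolding g_def add_Suc_right .
qed

lemma rational_rep_power_mult_power:
  assumes "rational_rep f a b" "p \<in> poly_fun"
  shows "rational_rep (\<lambda>x. p x ^ l * f x ^ t) (\<lambda>x. p x ^ l * a x ^ t) (\<lambda>x. b x ^ t)"
  using assms unfolding rational_rep_def
  by (auto intro!: poly_fun.pf_mult poly_fun_power simp: power_divide)

theorem corollary2p11:
  fixes f p q :: "real^'n \<Rightarrow> real" and k :: nat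
  assumes "regulous k f"
    and "p \<in> poly_fun" and "q \<in> poly_fun"
    and "\<forall>x\<in>rdom f. q x \<noteq> 0"
    and "\<forall>x\<in>rdom f. f x = p x / q x"
  shows "\<forall>(l::nat) (t::nat). t \<ge> 1 \<longrightarrow> regulous (k + l) (\<lambda>x. p x ^ l * f x ^ t)"
proof (intro allI impI)
  fix l t :: nat assume "t \<ge> 1"
  obtain a b where rep: "rational_rep f a b" and "Ck k f"
    using assms(1) unfolding regulous_def by blast
  then obtain c where "b \<in> poly_fun" "b c \<noteq> 0"
    unfolding rational_rep_def by fastforce
  moreover have "q z \<noteq> 0 \<and> f z = p z / q z" if "b z \<noteq> 0" for z
    using rep that assms(4,5) unfolding rdom_def by blast
  ultimately have "Ck (k + l) (\<lambda>x. p x ^ l * f x ^ t)"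
    using Ck_poly_power_mult_power[OF \<open>Ck k f\<close> assms(2,3)] \<open>t \<ge> 1\<close> by blast
  then show "regulous (k + l) (\<lambda>x. p x ^ l * f x ^ t)"
    using rational_rep_power_mult_power[OF rep assms(2)] unfolding regulous_def by blast
qed

end
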